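(* For every $\alpha,\beta>1$ and $\varepsilon>0$: (a) there is an instance with $N=C$ and an outcome that satisfies $\alpha$-proportional fairness but not $(\alpha+1-\varepsilon)$-individual fairness; (b) there is an instance with $N=C$ and an outcome that satisfies $\beta$-individual fairness but not $(\beta+1-\varepsilon)$-proportional fairness; (c) there is an instance with $N\subseteq C$ and an outcome that satisfies $\beta$-individual fairness but not $(2\beta-\varepsilon)$-proportional fairness.
   Context: Let $(\mathcal X,d)$ be a metric space, $N=[n]$ a set of agents and $C$ a set of candidates located in $\mathcal X$, $k\in\mathbb N^+$; an outcome is $W\subseteq C$ with $|W|\le k$; $B(i,r)=\{x\in\mathcal X:d(i,x)\le r\}$; $d(i,W)=\min_{c\in W}d(i,c)$. $\alpha$-proportional fairness: there is no group $N'\subseteq N$ with $|N'|\ge n/k$ and candidate $c\in C\setminus W$ such that $\alpha\, d(i,c)<d(i,W)$ for all $i\in N'$. $\beta$-individual fairness (for instances with $N\subseteq C$): $d(i,W)\le\beta\, r(i)$ for all $i\in N$, where $r(i)=\min\{r\in\mathbb R: |B(i,r)\cap N|\ge n/k\}$. *)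

theory Defs
  imports "HOL-Library.Extended_Real"
begin

text \<open>Points of an instance live in an arbitrary metric d on a countable carrier (nat);
every finite instance embeds isometrically into such a space.\<close>

definition is_metric :: "(nat \<Rightarrow> nat \<Rightarrow> real) \<Rightarrow> bool" where
  "is_metric d \<longleftrightarrow> (\<forall>x y. d x y = 0 \<longleftrightarrow> x = y) \<and> (\<forall>x y. d x y = d y x)
     \<and> (\<forall>x y z. d x z \<le> d x y + d y z)"

definition is_instance :: "nat set \<Rightarrow> nat set \<Rightarrow> nat \<Rightarrow> bool" where
  "is_instance N C k \<longleftrightarrow> finite N \<and> N \<noteq> {} \<and> finite C \<and> k > 0"

definition outcome :: "nat set \<Rightarrow> nat \<Rightarrow> nat set \<Rightarrow> bool" where
  "outcome C k W \<longleftrightarrow> W \<subseteq> C \<and> card W \<le> k"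

text \<open>d(i,W) = min over W; +\<infinity> for empty W.\<close>
definition distW :: "(nat \<Rightarrow> nat \<Rightarrow> real) \<Rightarrow> nat \<Rightarrow> nat set \<Rightarrow> ereal" where
  "distW d i W = (INF c\<in>W. ereal (d i c))"

definition prop_fair :: "(nat \<Rightarrow> nat \<Rightarrow> real) \<Rightarrow> nat set \<Rightarrow> nat set \<Rightarrow> nat \<Rightarrow> real \<Rightarrow> nat set \<Rightarrow> bool" where
  "prop_fair d N C k \<alpha> W \<longleftrightarrow>
     \<not> (\<exists>N' \<subseteq> N. real (card N') \<ge> real (card N) / real k \<and>
          (\<exists>c \<in> C - W. \<forall>i \<in> N'. ereal (\<alpha> * d i c) < distW d i W))"

definition fair_radius :: "(nat \<Rightarrow> nat \<Rightarrow> real) \<Rightarrow> nat set \<Rightarrow> nat \<Rightarrow> nat \<Rightarrow> real" where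
  "fair_radius d N k i = (LEAST r::real. real (card {j \<in> N. d i j \<le> r}) \<ge> real (card N) / real k)"

definition ind_fair :: "(nat \<Rightarrow> nat \<Rightarrow> real) \<Rightarrow> nat set \<Rightarrow> nat \<Rightarrow> real \<Rightarrow> nat set \<Rightarrow> bool" where
  "ind_fair d N k \<beta> W \<longleftrightarrow> (\<forall>i \<in> N. distW d i W \<le> ereal (\<beta> * fair_radius d N k i))"

end

theory Submission
  imports Defs
begin

text \<open>Proportional fairness only constrains coalitions of at least n/k agents, whereas individual
fairness compares each agent with its own radius r(i). All three gaps are exhibited by instances
with k = 2: four points carrying a small path metric and, where coalitions must have three
members, a fifth far-away agent; every other point of the carrier is put at one large distance.
Lower bounds on r(i) come from fewer than n/k agents outside of which everyone is far from i;
the upper bound needs the least radius in the definition of r(i) to be attained, which holds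
because the number of agents within radius r only jumps at the finitely many distances from i.\<close>

lemma is_metric_nonneg:
  assumes "is_metric d"
  shows "0 \<le> d x y"
proof -
  have "d x x \<le> d x y + d y x" "d x x = 0" "d y x = d x y"
    using assms unfolding is_metric_def by blast+
  then show ?thesis
    by linarith
qed

lemma least_sublevel_card_exists:
  fixes f :: "'a \<Rightarrow> real"
  assumes "finite A" and "0 < t" and "t \<le> real (card A)"
  shows "\<exists>r. t \<le> real (card {x\<in>A. f x \<le> r}) \<and>
             (\<forall>y. t \<le> real (card {x\<in>A. f x \<le> y}) \<longrightarrow> r \<le> y)"
proof -
  define S where "S = {v \<in> f ` A. t \<le> real (card {x\<in>A. f x \<le> v})}"
  have "finite S"
    using assms(1) by (simp add: S_def)
  have "A \<noteq> {}"
    using assms(2,3) by auto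
  moreover have "{x\<in>A. f x \<le> Max (f ` A)} = A"
    using assms(1) by auto
  ultimately have "Max (f ` A) \<in> S"
    using assms(1,3) by (simp add: S_def)
  then have "Min S \<in> S"
    using \<open>finite S\<close> by (intro Min_in) auto
  moreover have "Min S \<le> y" if "t \<le> real (card {x\<in>A. f x \<le> y})" for y
  proof -
    define B where "B = {x\<in>A. f x \<le> y}"
    have "finite B"
      using assms(1) by (simp add: B_def)
    moreover have "B \<noteq> {}"
      using that assms(2) B_def by force
    define v where "v = Max (f ` B)"
    have "v \<in> f ` B"
      using \<open>B \<noteq> {}\<close> \<open>finite B\<close> by (simp add: v_def)
    then have "v \<le> y" and "v \<in> f ` A"
      by (auto simp: B_def)
    \<comment> \<open>the largest value of f below y cuts out the same sublevel set as y\<close>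
    have "{x\<in>A. f x \<le> v} = B"
      using \<open>v \<le> y\<close> \<open>finite B\<close> by (auto simp: v_def B_def)
    then have "v \<in> S"
      using that \<open>v \<in> f ` A\<close> by (simp add: S_def B_def)
    then show "Min S \<le> y"
      using \<open>finite S\<close> \<open>v \<le> y\<close> by (meson Min_le order_trans)
  qed
  ultimately show ?thesis
    by (auto simp: S_def)
qed

lemma fair_radius_is_least:
  assumes "finite N" and "N \<noteq> {}" and "0 < k"
  shows "real (card N) / real k \<le> real (card {j\<in>N. d i j \<le> fair_radius d N k i})"
    and "real (card N) / real k \<le> real (card {j\<in>N. d i j \<le> r}) \<Longrightarrow> fair_radius d N k i \<le> r"
proof -
  have "real (card N) / real k \<le> real (card N)"
    using assms(3) by (simp add: divide_le_eq mult_le_cancel_left1)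
  moreover have "0 < real (card N) / real k"
    using assms by (simp add: card_gt_0_iff)
  ultimately obtain r0 where covers: "real (card N) / real k \<le> real (card {j\<in>N. d i j \<le> r0})"
    and least: "\<And>y. real (card N) / real k \<le> real (card {j\<in>N. d i j \<le> y}) \<Longrightarrow> r0 \<le> y"
    using least_sublevel_card_exists[OF assms(1)] by blast
  then have "fair_radius d N k i = r0"
    unfolding fair_radius_def by (intro Least_equality) auto
  with covers least show
    "real (card N) / real k \<le> real (card {j\<in>N. d i j \<le> fair_radius d N k i})"
    "real (card N) / real k \<le> real (card {j\<in>N. d i j \<le> r}) \<Longrightarrow> fair_radius d N k i \<le> r"
    by auto
qed

lemma le_fair_radius:
  assumes "finite N" and "N \<noteq> {}" and "0 < k" and "finite S"
    and "real (card S) < real (card N) / real k"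
    and "\<forall>j\<in>N - S. a \<le> d i j"
  shows "a \<le> fair_radius d N k i"
proof (rule ccontr)
  assume "\<not> a \<le> fair_radius d N k i"
  then have "{j\<in>N. d i j \<le> fair_radius d N k i} \<subseteq> S"
    using assms(6) by force
  then have "card {j\<in>N. d i j \<le> fair_radius d N k i} \<le> card S"
    using assms(4) by (rule card_mono[rotated])
  then show False
    using fair_radius_is_least(1)[OF assms(1-3), of d i] assms(5) by linarith
qed

lemma fair_radius_nonneg:
  assumes "is_metric d" and "finite N" and "N \<noteq> {}" and "0 < k"
  shows "0 \<le> fair_radius d N k i"
  using assms(2-4) is_metric_nonneg[OF assms(1)]
  by (intro le_fair_radius[where S = "{}"]) (auto simp: card_gt_0_iff)

lemma distW_empty: "distW d i {} = \<infinity>"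
  by (simp add: distW_def top_ereal_def)

lemma distW_insert: "distW d i (insert c W) = min (ereal (d i c)) (distW d i W)"
  by (simp add: distW_def inf_min)

lemma distW_mem:
  assumes "is_metric d" and "i \<in> W"
  shows "distW d i W = 0"
proof (rule antisym)
  have "d i i = 0"
    using assms(1) by (simp add: is_metric_def)
  then show "distW d i W \<le> 0"
    unfolding distW_def using assms(2) by (metis INF_lower zero_ereal_def)
  show "0 \<le> distW d i W"
    unfolding distW_def using is_metric_nonneg[OF assms(1)] by (simp add: INF_greatest)
qed

lemma mem_not_deviates:
  assumes "is_metric d" and "0 \<le> \<alpha>" and "i \<in> W"
  shows "\<not> ereal (\<alpha> * d i c) < distW d i W"
  using distW_mem[OF assms(1,3)] is_metric_nonneg[OF assms(1)] assms(2)
  by (simp add: not_less)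

definition far_extension :: "(nat \<Rightarrow> nat \<Rightarrow> real) \<Rightarrow> nat set \<Rightarrow> real \<Rightarrow> nat \<Rightarrow> nat \<Rightarrow> real" where
  "far_extension d P M x y = (if x = y then 0 else if x \<in> P \<and> y \<in> P then d x y else M)"

lemma is_metric_far_extension:
  assumes pos: "\<And>x y. x \<in> P \<Longrightarrow> y \<in> P \<Longrightarrow> x \<noteq> y \<Longrightarrow> 0 < d x y"
    and sym: "\<And>x y. x \<in> P \<Longrightarrow> y \<in> P \<Longrightarrow> d x y = d y x"
    and tri: "\<And>x y z. x \<in> P \<Longrightarrow> y \<in> P \<Longrightarrow> z \<in> P \<Longrightarrow> x \<noteq> y \<Longrightarrow> y \<noteq> z \<Longrightarrow> x \<noteq> z \<Longrightarrow>
                d x z \<le> d x y + d y z"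
    and bounded: "\<And>x y. x \<in> P \<Longrightarrow> y \<in> P \<Longrightarrow> d x y \<le> 2 * M"
    and "0 < M"
  shows "is_metric (far_extension d P M)"
proof -
  let ?e = "far_extension d P M"
  have e_pos: "0 < ?e x y" if "x \<noteq> y" for x y
    using that pos \<open>0 < M\<close> by (simp add: far_extension_def)
  have e_zero: "?e x y = 0 \<longleftrightarrow> x = y" for x y
    using e_pos[of x y] by (auto simp: far_extension_def)
  have e_sym: "?e x y = ?e y x" for x y
    using sym by (simp add: far_extension_def)
  have e_tri: "?e x z \<le> ?e x y + ?e y z" for x y z
  proof (cases "x = y \<or> y = z \<or> x = z")
    case True
    then show ?thesis
      using e_pos[of x y] e_pos[of y z] by (auto simp: far_extension_def)
  next
    case False
    then show ?thesis
      using tri[of x y z] bounded[of x z] e_pos[of x y] e_pos[of y z] \<open>0 < M\<close>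
      by (auto simp: far_extension_def)
  qed
  show ?thesis
    unfolding is_metric_def using e_zero e_sym e_tri by blast
qed

definition four_point_dist :: "real \<Rightarrow> real \<Rightarrow> real \<Rightarrow> real \<Rightarrow> real \<Rightarrow> real \<Rightarrow> nat \<Rightarrow> nat \<Rightarrow> real" where
  "four_point_dist d01 d02 d03 d12 d13 d23 x y =
     [[0, d01, d02, d03],
      [d01, 0, d12, d13],
      [d02, d12, 0, d23],
      [d03, d13, d23, 0]] ! x ! y"

definition is_triangle :: "real \<Rightarrow> real \<Rightarrow> real \<Rightarrow> bool" where
  "is_triangle a b c \<longleftrightarrow> a \<le> b + c \<and> b \<le> a + c \<and> c \<le> a + b"

lemma is_metric_four_point:
  assumes bounds: "\<forall>p\<in>{d01, d02, d03, d12, d13, d23}. 0 < p \<and> p \<le> 2 * M"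
    and "is_triangle d01 d02 d12" and "is_triangle d01 d03 d13"
    and "is_triangle d02 d03 d23" and "is_triangle d12 d13 d23"
  shows "is_metric (far_extension (four_point_dist d01 d02 d03 d12 d13 d23) {0, 1, 2, 3} M)"
proof (rule is_metric_far_extension)
  let ?d = "four_point_dist d01 d02 d03 d12 d13 d23"
  have points: "x \<in> {0, 1, 2, 3} \<longleftrightarrow> x = 0 \<or> x = 1 \<or> x = 2 \<or> x = (3::nat)" for x
    by simp
  show "0 < M"
    using bounds by auto
  fix x y z :: nat
  assume x: "x \<in> {0, 1, 2, 3}" and y: "y \<in> {0, 1, 2, 3}"
  then show "x \<noteq> y \<Longrightarrow> 0 < ?d x y" and "?d x y = ?d y x" and "?d x y \<le> 2 * M"
    using bounds unfolding points by (auto simp: four_point_dist_def)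
  assume "z \<in> {0, 1, 2, 3}" "x \<noteq> y" "y \<noteq> z" "x \<noteq> z"
  then show "?d x z \<le> ?d x y + ?d y z"
    using x y assms(2-5) unfolding points is_triangle_def by (auto simp: four_point_dist_def)
qed

text \<open>The cycle 0--1--3--2--0 with edge lengths 1, \<alpha>, \<alpha>, 1. For W = {3, 4}, agent 0 is at distance
  \<alpha> + 1 from W while r(0) = 1. A deviating coalition must contain agents 1 and 2, but only
  candidate 1 is closer than 1 to agent 1, and only candidate 2 to agent 2.\<close>

definition dist_a :: "real \<Rightarrow> nat \<Rightarrow> nat \<Rightarrow> real" where
  "dist_a \<alpha> = far_extension (four_point_dist 1 1 (\<alpha> + 1) 2 \<alpha> \<alpha>) {0, 1, 2, 3} (\<alpha> + 1)"

lemma is_metric_dist_a: "1 < \<alpha> \<Longrightarrow> is_metric (dist_a \<alpha>)"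
  unfolding dist_a_def by (rule is_metric_four_point) (auto simp: is_triangle_def)

lemma prop_fair_dist_a:
  assumes "1 < \<alpha>"
  shows "prop_fair (dist_a \<alpha>) {0, 1, 2, 3, 4} {0, 1, 2, 3, 4} 2 \<alpha> {3, 4}"
  unfolding prop_fair_def
proof (intro notI, elim exE conjE bexE)
  fix N' c
  assume "N' \<subseteq> {0, 1, 2, 3, 4}" and large: "real (card {0::nat, 1, 2, 3, 4}) / real 2 \<le> real (card N')"
    and c: "c \<in> {0, 1, 2, 3, 4} - {3, 4}"
    and deviates: "\<forall>i\<in>N'. ereal (\<alpha> * dist_a \<alpha> i c) < distW (dist_a \<alpha>) i {3, 4}"
  have sub: "N' \<subseteq> {0, 1, 2}"
    using \<open>N' \<subseteq> _\<close> deviates mem_not_deviates[OF is_metric_dist_a[OF assms], of \<alpha> _ "{3, 4}"] assms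
    by fastforce
  moreover have "card N' = card {0::nat, 1, 2}"
    using large card_mono[OF _ sub] by simp
  ultimately have "N' = {0, 1, 2}"
    by (intro card_subset_eq) auto
  then have "\<alpha> * dist_a \<alpha> 1 c < \<alpha>" and "\<alpha> * dist_a \<alpha> 2 c < \<alpha>"
    using deviates assms by (auto simp: distW_insert distW_empty dist_a_def far_extension_def four_point_dist_def)
  then show False
    using c assms by (auto simp: dist_a_def far_extension_def four_point_dist_def)
qed

lemma not_ind_fair_dist_a:
  assumes "1 < \<alpha>" and "0 < \<epsilon>"
  shows "\<not> ind_fair (dist_a \<alpha>) {0, 1, 2, 3, 4} 2 (\<alpha> + 1 - \<epsilon>) {3, 4}"
proof -
  let ?N = "{0::nat, 1, 2, 3, 4}"
  have "fair_radius (dist_a \<alpha>) ?N 2 0 \<le> 1"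
  proof (rule fair_radius_is_least(2))
    have "{j\<in>?N. dist_a \<alpha> 0 j \<le> 1} = {0, 1, 2}"
      using assms by (auto simp: dist_a_def far_extension_def four_point_dist_def)
    then show "real (card ?N) / real 2 \<le> real (card {j\<in>?N. dist_a \<alpha> 0 j \<le> 1})"
      by simp
  qed auto
  moreover have "1 \<le> fair_radius (dist_a \<alpha>) ?N 2 0"
    using assms by (intro le_fair_radius[where S = "{0}"])
      (auto simp: dist_a_def far_extension_def four_point_dist_def)
  moreover have "distW (dist_a \<alpha>) 0 {3, 4} = ereal (\<alpha> + 1)"
    by (simp add: distW_insert distW_empty dist_a_def far_extension_def four_point_dist_def)
  ultimately show ?thesis
    unfolding ind_fair_def using assms by auto
qed

text \<open>The star with centre 0 and legs 1, 1, \<beta> to 1, 2, 3. The coalition {0, 1, 2} gains a factor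
  \<beta> + 1 - \<epsilon> by moving to candidate 0, while r(1) = r(2) = 2 lets W = {3, 4} serve agents 1 and 2
  at distance \<beta> + 1 \<le> 2\<beta>.\<close>

definition dist_b :: "real \<Rightarrow> nat \<Rightarrow> nat \<Rightarrow> real" where
  "dist_b \<beta> = far_extension (four_point_dist 1 1 \<beta> 2 (\<beta> + 1) (\<beta> + 1)) {0, 1, 2, 3} (\<beta> + 1)"

lemma is_metric_dist_b: "1 < \<beta> \<Longrightarrow> is_metric (dist_b \<beta>)"
  unfolding dist_b_def by (rule is_metric_four_point) (auto simp: is_triangle_def)

lemma ind_fair_dist_b:
  assumes "1 < \<beta>"
  shows "ind_fair (dist_b \<beta>) {0, 1, 2, 3, 4} 2 \<beta> {3, 4}"
proof -
  let ?N = "{0::nat, 1, 2, 3, 4}"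
  let ?r = "fair_radius (dist_b \<beta>) ?N 2"
  have r0: "1 \<le> ?r 0"
    using assms by (intro le_fair_radius[where S = "{0}"])
      (auto simp: dist_b_def far_extension_def four_point_dist_def)
  have r1: "2 \<le> ?r 1"
    using assms by (intro le_fair_radius[where S = "{0, 1}"])
      (auto simp: dist_b_def far_extension_def four_point_dist_def)
  have r2: "2 \<le> ?r 2"
    using assms by (intro le_fair_radius[where S = "{0, 2}"])
      (auto simp: dist_b_def far_extension_def four_point_dist_def)
  have r_nonneg: "0 \<le> ?r i" for i
    using is_metric_dist_b[OF assms] by (rule fair_radius_nonneg) auto
  have "\<beta> * 1 \<le> \<beta> * ?r 0" "\<beta> * 2 \<le> \<beta> * ?r 1" "\<beta> * 2 \<le> \<beta> * ?r 2"
    using r0 r1 r2 assms by (intro mult_left_mono; simp)+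
  then have "\<beta> \<le> \<beta> * ?r 0" "\<beta> + 1 \<le> \<beta> * ?r 1" "\<beta> + 1 \<le> \<beta> * ?r 2"
    using assms by linarith+
  moreover have "0 \<le> \<beta> * ?r i" for i
    using r_nonneg assms by simp
  moreover have "distW (dist_b \<beta>) 0 {3, 4} = ereal \<beta>" "distW (dist_b \<beta>) 1 {3, 4} = ereal (\<beta> + 1)"
    "distW (dist_b \<beta>) 2 {3, 4} = ereal (\<beta> + 1)"
    using assms by (simp_all add: distW_insert distW_empty dist_b_def far_extension_def four_point_dist_def)
  moreover have "distW (dist_b \<beta>) i {3, 4} = 0" if "i \<in> {3, 4}" for i
    using distW_mem[OF is_metric_dist_b[OF assms] that] .
  ultimately show ?thesis
    unfolding ind_fair_def by simp
qed

lemma not_prop_fair_dist_b: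
  assumes "1 < \<beta>" and "0 < \<epsilon>"
  shows "\<not> prop_fair (dist_b \<beta>) {0, 1, 2, 3, 4} {0, 1, 2, 3, 4} 2 (\<beta> + 1 - \<epsilon>) {3, 4}"
  unfolding prop_fair_def not_not
proof (intro exI[of _ "{0, 1, 2}"] conjI bexI[of _ 0] ballI)
  show "real (card {0::nat, 1, 2, 3, 4}) / real 2 \<le> real (card {0::nat, 1, 2})"
    by simp
  fix i assume "i \<in> {0::nat, 1, 2}"
  then show "ereal ((\<beta> + 1 - \<epsilon>) * dist_b \<beta> i 0) < distW (dist_b \<beta>) i {3, 4}"
    using assms by (auto simp: distW_insert distW_empty dist_b_def far_extension_def four_point_dist_def)
qed auto

text \<open>The star with centre 3 and legs 1, 1, 2\<beta> - 1 to 0, 1, 2, where the centre is a candidate but not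
  an agent. Agents 0 and 1 have r = 2 and are at distance 2\<beta> from W = {2}, but at distance 1
  from candidate 3.\<close>

definition dist_c :: "real \<Rightarrow> nat \<Rightarrow> nat \<Rightarrow> real" where
  "dist_c \<beta> = far_extension (four_point_dist 2 (2 * \<beta>) 1 (2 * \<beta>) 1 (2 * \<beta> - 1)) {0, 1, 2, 3} (2 * \<beta>)"

lemma is_metric_dist_c: "1 < \<beta> \<Longrightarrow> is_metric (dist_c \<beta>)"
  unfolding dist_c_def by (rule is_metric_four_point) (auto simp: is_triangle_def)

lemma ind_fair_dist_c:
  assumes "1 < \<beta>"
  shows "ind_fair (dist_c \<beta>) {0, 1, 2} 2 \<beta> {2}"
proof -
  let ?N = "{0::nat, 1, 2}"
  let ?r = "fair_radius (dist_c \<beta>) ?N 2"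
  have r0: "2 \<le> ?r 0"
    using assms by (intro le_fair_radius[where S = "{0}"])
      (auto simp: dist_c_def far_extension_def four_point_dist_def)
  have r1: "2 \<le> ?r 1"
    using assms by (intro le_fair_radius[where S = "{1}"])
      (auto simp: dist_c_def far_extension_def four_point_dist_def)
  have "\<beta> * 2 \<le> \<beta> * ?r 0" "\<beta> * 2 \<le> \<beta> * ?r 1"
    using r0 r1 assms by (intro mult_left_mono; simp)+
  moreover have "0 \<le> \<beta> * ?r 2"
    using fair_radius_nonneg[OF is_metric_dist_c[OF assms]] assms by simp
  moreover have "distW (dist_c \<beta>) 0 {2} = ereal (2 * \<beta>)" "distW (dist_c \<beta>) 1 {2} = ereal (2 * \<beta>)"
    by (simp_all add: distW_insert distW_empty dist_c_def far_extension_def four_point_dist_def)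
  moreover have "distW (dist_c \<beta>) 2 {2} = 0"
    using distW_mem[OF is_metric_dist_c[OF assms]] by simp
  ultimately show ?thesis
    unfolding ind_fair_def by (simp add: mult.commute)
qed

lemma not_prop_fair_dist_c:
  assumes "1 < \<beta>" and "0 < \<epsilon>"
  shows "\<not> prop_fair (dist_c \<beta>) {0, 1, 2} {0, 1, 2, 3} 2 (2 * \<beta> - \<epsilon>) {2}"
  unfolding prop_fair_def not_not
proof (intro exI[of _ "{0, 1}"] conjI bexI[of _ 3] ballI)
  fix i assume "i \<in> {0::nat, 1}"
  then show "ereal ((2 * \<beta> - \<epsilon>) * dist_c \<beta> i 3) < distW (dist_c \<beta>) i {2}"
    using assms by (auto simp: distW_insert distW_empty dist_c_def far_extension_def four_point_dist_def)
qed auto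

theorem theorem2:
  fixes \<alpha> \<beta> \<epsilon> :: real
  assumes "\<alpha> > 1" and "\<beta> > 1" and "\<epsilon> > 0"
  shows "(\<exists>d N C k W. is_metric d \<and> is_instance N C k \<and> N = C \<and> outcome C k W \<and>
            prop_fair d N C k \<alpha> W \<and> \<not> ind_fair d N k (\<alpha> + 1 - \<epsilon>) W)
       \<and> (\<exists>d N C k W. is_metric d \<and> is_instance N C k \<and> N = C \<and> outcome C k W \<and>
            ind_fair d N k \<beta> W \<and> \<not> prop_fair d N C k (\<beta> + 1 - \<epsilon>) W)
       \<and> (\<exists>d N C k W. is_metric d \<and> is_instance N C k \<and> N \<subseteq> C \<and> outcome C k W \<and>
            ind_fair d N k \<beta> W \<and> \<not> prop_fair d N C k (2 * \<beta> - \<epsilon>) W)"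
proof -
  have five_agents: "is_instance {0, 1, 2, 3, 4} {0, 1, 2, 3, 4} 2" "outcome {0, 1, 2, 3, 4} 2 {3, 4}"
    by (simp_all add: is_instance_def outcome_def)
  have three_agents: "is_instance {0, 1, 2} {0, 1, 2, 3} 2" "outcome {0, 1, 2, 3} 2 {2}"
    by (simp_all add: is_instance_def outcome_def)
  show ?thesis
    using five_agents is_metric_dist_a[OF assms(1)] prop_fair_dist_a[OF assms(1)]
      not_ind_fair_dist_a[OF assms(1,3)]
      is_metric_dist_b[OF assms(2)] ind_fair_dist_b[OF assms(2)] not_prop_fair_dist_b[OF assms(2,3)]
      three_agents is_metric_dist_c[OF assms(2)] ind_fair_dist_c[OF assms(2)]
      not_prop_fair_dist_c[OF assms(2,3)]
    by blast
qed

end
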